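(* Assume the setting and conditions $\mathscr R_1$–$\mathscr R_4$ of the context. Then there exists a constant $\kappa>0$ not depending on $n$ such that for all $n$ and all $u\in\mathbb U_n$, $$\sup_{\vartheta_0\in\Theta}\mathbf E_{\vartheta_0}Z_n^{1/2}(u)\le e^{-\kappa\|u\|^2}.$$
   Context: Setting. $\Theta\subset\mathbb R^2$ is a bounded open convex set; $T>0$, $\nu>0$, $\lambda_0>0$ are known; $k\ge3$ detectors are at known points $\vartheta_j=(x_j,y_j)$. $\tau_j(\vartheta)=\nu^{-1}\|\vartheta_j-\vartheta\|$, $\alpha_j=\inf_{\Theta}\tau_j$, $\beta_j=\sup_\Theta\tau_j$, with $0<\alpha_j$, $\beta_j<T$; $\lambda_j$ is defined on $[-\beta_j,T-\alpha_j]$. Under $\mathbf P_\vartheta$ the observation $X^n=(X_1,\dots,X_k)$ consists of independent inhomogeneous Poisson processes on $[0,T]$ with intensities $n\lambda_j(t-\tau_j(\vartheta))+n\lambda_0$. $L(\vartheta,X^n)$ is the likelihood ratio $$\ln L(\vartheta,X^n)=\sum_{j=1}^k\int_{\tau_j(\vartheta)}^T\ln\Big(1+\frac{\lambda_j(t-\tau_j(\vartheta))}{\lambda_0}\Big)dX_j(t)-n\sum_{j=1}^k\int_{\tau_j(\vartheta)}^T\lambda_j(t-\tau_j(\vartheta))\,dt ,$$ and $Z_n(u)=L(\vartheta_0+u/\sqrt n,X^n)/L(\vartheta_0,X^n)$ for $u\in\mathbb U_n=\{u:\vartheta_0+u/\sqrt n\in\Theta\}$. Fisher information: $J_j(\vartheta)=\dfrac{1}{\nu^2\|\vartheta_j-\vartheta\|^2}\displaystyle\int_{\tau_j(\vartheta)}^T\frac{\lambda_j'(t-\tau_j(\vartheta))^2}{\lambda_j(t-\tau_j(\vartheta))+\lambda_0}dt$,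 $\mathbb I(\vartheta)=\sum_{j=1}^kJ_j(\vartheta)(\vartheta_j-\vartheta)(\vartheta_j-\vartheta)^\top$. Conditions: ($\mathscr R_1$) $\lambda_j(t)=0$ on $[-\beta_j,0]$ and $\lambda_j(t)>0$ on $(0,T-\alpha_j]$; ($\mathscr R_2$) each $\lambda_j$ has two continuous derivatives; ($\mathscr R_3$) $\inf_{\vartheta\in\Theta}\inf_{|e|=1}e^\top\mathbb I(\vartheta)e>0$; ($\mathscr R_4$) at least three detector points are not collinear. *)

theory Defs
  imports "HOL-Probability.Probability"
begin

definition tau :: "real \<Rightarrow> real^2 \<Rightarrow> real^2 \<Rightarrow> real" where
  "tau \<nu> dj \<theta> = dist dj \<theta> / \<nu>"

definition alpha :: "real \<Rightarrow> real^2 \<Rightarrow> (real^2) set \<Rightarrow> real" where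
  "alpha \<nu> dj \<Theta> = (INF \<theta>\<in>\<Theta>. tau \<nu> dj \<theta>)"

definition beta :: "real \<Rightarrow> real^2 \<Rightarrow> (real^2) set \<Rightarrow> real" where
  "beta \<nu> dj \<Theta> = (SUP \<theta>\<in>\<Theta>. tau \<nu> dj \<theta>)"

text \<open>Expectation of a nonnegative functional F of k independent inhomogeneous
  Poisson processes on [0,T] with intensities mu j (j < k).  A realisation of
  process j is represented by the list of its event times; the law is the
  standard one (Janossy densities): the number of points m_j is Poisson with mean
  Lambda_j = integral of mu j over [0,T], and given m_j the points are i.i.d. with
  density mu_j / Lambda_j on [0,T].\<close>

definition pp_expect ::
  "nat \<Rightarrow> real \<Rightarrow> (nat \<Rightarrow> real \<Rightarrow> real) \<Rightarrow> ((nat \<Rightarrow> real list) \<Rightarrow> ennreal) \<Rightarrow> ennreal" where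
  "pp_expect k T mu F =
     (\<integral>\<^sup>+ m. (\<Prod>j<k. ennreal (exp (- integral {0..T} (mu j)) / fact (m j))) *
        (\<integral>\<^sup>+ t. F (\<lambda>j. if j < k then map (\<lambda>i. t (j, i)) [0..<m j] else []) *
                 (\<Prod>p\<in>{(j, i). j < k \<and> i < m j}. ennreal (mu (fst p) (t p)))
           \<partial>PiM {(j, i). j < k \<and> i < m j} (\<lambda>_. restrict_space lborel {0..T}))
      \<partial>count_space (PiE {..<k} (\<lambda>_. UNIV)))"

text \<open>Log-likelihood ratio ln L(theta, X); the stochastic integral against the
  counting process X_j is the sum over its event times.\<close>

definition loglik ::
  "nat \<Rightarrow> real \<Rightarrow> real \<Rightarrow> real \<Rightarrow> (nat \<Rightarrow> real \<Rightarrow> real) \<Rightarrow> (nat \<Rightarrow> real^2) \<Rightarrow> nat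
    \<Rightarrow> real^2 \<Rightarrow> (nat \<Rightarrow> real list) \<Rightarrow> real" where
  "loglik n T \<nu> l0 lam dp k \<theta> X =
     (\<Sum>j<k. sum_list (map (\<lambda>t. if tau \<nu> (dp j) \<theta> \<le> t \<and> t \<le> T
                                 then ln (1 + lam j (t - tau \<nu> (dp j) \<theta>) / l0) else 0) (X j)))
     - real n * (\<Sum>j<k. integral {tau \<nu> (dp j) \<theta>..T} (\<lambda>t. lam j (t - tau \<nu> (dp j) \<theta>)))"

definition fisherJ ::
  "real \<Rightarrow> real \<Rightarrow> real \<Rightarrow> (nat \<Rightarrow> real \<Rightarrow> real) \<Rightarrow> (nat \<Rightarrow> real \<Rightarrow> real) \<Rightarrow> (nat \<Rightarrow> real^2)
    \<Rightarrow> nat \<Rightarrow> real^2 \<Rightarrow> real" where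
  "fisherJ T \<nu> l0 lam lam' dp j \<theta> =
     1 / (\<nu>\<^sup>2 * (dist (dp j) \<theta>)\<^sup>2) *
     integral {tau \<nu> (dp j) \<theta>..T}
       (\<lambda>t. (lam' j (t - tau \<nu> (dp j) \<theta>))\<^sup>2 / (lam j (t - tau \<nu> (dp j) \<theta>) + l0))"

definition fisherI ::
  "real \<Rightarrow> real \<Rightarrow> real \<Rightarrow> (nat \<Rightarrow> real \<Rightarrow> real) \<Rightarrow> (nat \<Rightarrow> real \<Rightarrow> real) \<Rightarrow> (nat \<Rightarrow> real^2)
    \<Rightarrow> nat \<Rightarrow> real^2 \<Rightarrow> real^2^2" where
  "fisherI T \<nu> l0 lam lam' dp k \<theta> =
     (\<Sum>j<k. fisherJ T \<nu> l0 lam lam' dp j \<theta> *\<^sub>R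
              (\<chi> a b. (dp j - \<theta>) $ a * (dp j - \<theta>) $ b))"

end

theory Submission
  imports Defs
begin

text \<open>
  Given the event times, the likelihood ratio is a product over the points, so the probability
  generating functional of the Poisson processes computes the expectation exactly: it equals
  \<open>exp (- (n / 2) * (\<Sum>j. H j))\<close>, where \<open>H j\<close> is the squared Hellinger distance on
  \<open>[0, T]\<close> between the intensities \<open>\<lambda>\<^sub>j (t - \<tau>\<^sub>j \<theta>) + \<lambda>\<^sub>0\<close> and
  \<open>\<lambda>\<^sub>j (t - \<tau>\<^sub>j \<theta>\<^sub>0) + \<lambda>\<^sub>0\<close> with \<open>\<theta> = \<theta>\<^sub>0 + u / sqrt n\<close>.
  Since \<open>\<lambda>\<^sub>j\<close> vanishes before its onset and increases at a positive rate somewhere after it,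
  \<open>H j \<ge> c * (\<tau>\<^sub>j \<theta> - \<tau>\<^sub>j \<theta>\<^sub>0)\<^sup>2\<close>. For three non-collinear detectors the delay differences
  control \<open>(norm (\<theta> - \<theta>\<^sub>0))\<^sup>2 = (norm u)\<^sup>2 / n\<close>, because differences of squared distances to
  the detectors are linear in \<open>\<theta> - \<theta>\<^sub>0\<close>.
\<close>

section \<open>Poisson expectations of product functionals\<close>

lemma nn_integral_exp_series:
  fixes A c :: real
  assumes "0 \<le> A" "0 \<le> c"
  shows "(\<integral>\<^sup>+ n. ennreal (c * A ^ n / fact n) \<partial>count_space UNIV) = ennreal (c * exp A)"
proof -
  have sums: "(\<lambda>n. c * A ^ n / fact n) sums (c * exp A)"
    using sums_mult[OF exp_converges[of A], of c] by (simp add: divide_inverse mult_ac)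
  have "(\<integral>\<^sup>+ n. ennreal (c * A ^ n / fact n) \<partial>count_space UNIV) = ennreal (\<Sum>n. c * A ^ n / fact n)"
    using assms sums_summable[OF sums] by (simp add: nn_integral_count_space_nat suminf_ennreal2)
  then show ?thesis
    using sums_unique[OF sums] by simp
qed

lemma nn_integral_count_space_PiE_prod:
  fixes f :: "'i \<Rightarrow> nat \<Rightarrow> ennreal"
  assumes "finite J"
  shows "(\<integral>\<^sup>+ m. (\<Prod>j\<in>J. f j (m j)) \<partial>count_space (PiE J (\<lambda>_. UNIV)))
           = (\<Prod>j\<in>J. \<integral>\<^sup>+ n. f j n \<partial>count_space UNIV)"
proof -
  interpret product_sigma_finite "\<lambda>_::'i. count_space (UNIV :: nat set)"
    by (simp add: product_sigma_finite_def sigma_finite_measure_count_space)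
  show ?thesis
    using assms by (simp add: count_space_PiM_finite[symmetric] product_nn_integral_prod)
qed

lemma nn_integral_interval_continuous:
  fixes g :: "real \<Rightarrow> real"
  assumes "continuous_on {0..T} g" "\<And>x. x \<in> {0..T} \<Longrightarrow> 0 \<le> g x"
  shows "(\<integral>\<^sup>+ x. ennreal (g x) \<partial>restrict_space lborel {0..T}) = ennreal (integral {0..T} g)"
proof -
  have "(\<integral>\<^sup>+ x. ennreal (g x) \<partial>restrict_space lborel {0..T})
          = (\<integral>\<^sup>+ x. ennreal (g x) * indicator {0..T} x \<partial>lborel)"
    by (rule nn_integral_restrict_space) auto
  also have "\<dots> = ennreal (integral {0..T} g)"
    using assms integrable_integral[OF integrable_continuous_interval[OF assms(1)]]
    by (intro nn_integral_has_integral_lebesgue') auto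
  finally show ?thesis .
qed

lemma borel_measurable_interval_continuous:
  fixes g :: "real \<Rightarrow> real"
  assumes "continuous_on {0..T} g"
  shows "g \<in> borel_measurable (restrict_space lborel {0..T})"
  using borel_measurable_continuous_on_restrict[OF assms]
  by (subst measurable_cong_sets[OF sets_restrict_space_cong[OF sets_lborel] refl])

lemma nn_integral_PiM_interval_prod:
  fixes g :: "'i \<Rightarrow> real \<Rightarrow> real"
  assumes "finite I"
    and "\<And>p. p \<in> I \<Longrightarrow> continuous_on {0..T} (g p)"
    and "\<And>p x. p \<in> I \<Longrightarrow> x \<in> {0..T} \<Longrightarrow> 0 \<le> g p x"
  shows "(\<integral>\<^sup>+ t. c * (\<Prod>p\<in>I. ennreal (g p (t p))) \<partial>PiM I (\<lambda>_. restrict_space lborel {0..T}))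
           = c * (\<Prod>p\<in>I. ennreal (integral {0..T} (g p)))"
proof -
  interpret product_sigma_finite "\<lambda>_::'i. restrict_space lborel {0..T}"
    by (simp add: product_sigma_finite_def sigma_finite_measure_restrict_space
        lborel.sigma_finite_measure_axioms)
  have meas: "(\<lambda>x. ennreal (g p x)) \<in> borel_measurable (restrict_space lborel {0..T})" if "p \<in> I" for p
    using that assms(2) by (intro measurable_compose[OF borel_measurable_interval_continuous measurable_ennreal])
  have "(\<lambda>t. \<Prod>p\<in>I. ennreal (g p (t p))) \<in> borel_measurable (PiM I (\<lambda>_. restrict_space lborel {0..T}))"
    by (intro borel_measurable_prod_ennreal measurable_comp[OF measurable_component_singleton,
          unfolded comp_def] meas)
  moreover have "(\<integral>\<^sup>+ t. (\<Prod>p\<in>I. ennreal (g p (t p))) \<partial>PiM I (\<lambda>_. restrict_space lborel {0..T}))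
      = (\<Prod>p\<in>I. \<integral>\<^sup>+ x. ennreal (g p x) \<partial>restrict_space lborel {0..T})"
    using assms(1) meas by (rule product_nn_integral_prod)
  moreover have "\<dots> = (\<Prod>p\<in>I. ennreal (integral {0..T} (g p)))"
    using assms by (intro prod.cong nn_integral_interval_continuous) auto
  ultimately show ?thesis by (simp add: nn_integral_cmult)
qed

lemma prod_points_eq_prod_prod:
  fixes k :: nat and m :: "nat \<Rightarrow> nat"
  shows "(\<Prod>p\<in>{(j, i). j < k \<and> i < m j}. f (fst p) (snd p)) = (\<Prod>j<k. \<Prod>i<m j. f j i)"
proof -
  have "{(j, i). j < k \<and> i < m j} = Sigma {..<k} (\<lambda>j. {..<m j})" by auto
  moreover have "(\<Prod>j<k. \<Prod>i<m j. f j i) = (\<Prod>p\<in>Sigma {..<k} (\<lambda>j. {..<m j}). f (fst p) (snd p))"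
    by (simp add: prod.Sigma split_def)
  ultimately show ?thesis by simp
qed

context
  fixes k :: nat and T E0 :: real and mu phi :: "nat \<Rightarrow> real \<Rightarrow> real"
    and F :: "(nat \<Rightarrow> real list) \<Rightarrow> ennreal"
  assumes mu_cont: "\<And>j. j < k \<Longrightarrow> continuous_on {0..T} (mu j)"
    and phi_cont: "\<And>j. j < k \<Longrightarrow> continuous_on {0..T} (phi j)"
    and mu_nonneg: "\<And>j t. j < k \<Longrightarrow> t \<in> {0..T} \<Longrightarrow> 0 \<le> mu j t"
    and phi_nonneg: "\<And>j t. j < k \<Longrightarrow> t \<in> {0..T} \<Longrightarrow> 0 \<le> phi j t"
    and E0_nonneg: "0 \<le> E0"
    and F_points: "\<And>m t. (\<And>j i. j < k \<Longrightarrow> i < m j \<Longrightarrow> t (j, i) \<in> {0..T}) \<Longrightarrow>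
          F (\<lambda>j. if j < k then map (\<lambda>i. t (j, i)) [0..<m j] else []) =
          ennreal (E0 * (\<Prod>j<k. \<Prod>i<m j. phi j (t (j, i))))"
begin

lemma product_functional_integrand:
  assumes t: "\<And>p. p \<in> {(j, i). j < k \<and> i < m j} \<Longrightarrow> t p \<in> {0..T}"
  shows "F (\<lambda>j. if j < k then map (\<lambda>i. t (j, i)) [0..<m j] else []) *
           (\<Prod>p\<in>{(j, i). j < k \<and> i < m j}. ennreal (mu (fst p) (t p)))
         = ennreal E0 * (\<Prod>p\<in>{(j, i). j < k \<and> i < m j}. ennreal (phi (fst p) (t p) * mu (fst p) (t p)))"
proof -
  define I where "I = {(j, i). j < k \<and> i < m j}"
  have phi_t: "0 \<le> phi (fst p) (t p)" and mu_t: "0 \<le> mu (fst p) (t p)" if "p \<in> I" for p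
    using t that phi_nonneg mu_nonneg by (auto simp: I_def)
  have "F (\<lambda>j. if j < k then map (\<lambda>i. t (j, i)) [0..<m j] else [])
      = ennreal (E0 * (\<Prod>p\<in>I. phi (fst p) (t p)))"
    using F_points[of m t] t prod_points_eq_prod_prod[of "\<lambda>j i. phi j (t (j, i))"]
    by (auto simp: I_def)
  also have "\<dots> = ennreal E0 * (\<Prod>p\<in>I. ennreal (phi (fst p) (t p)))"
    using phi_t E0_nonneg by (simp add: ennreal_mult prod_nonneg prod_ennreal)
  finally show ?thesis
    using phi_t mu_t by (simp add: I_def[symmetric] ennreal_mult prod.distrib mult.assoc)
qed

lemma nn_integral_product_functional:
  "(\<integral>\<^sup>+ t. F (\<lambda>j. if j < k then map (\<lambda>i. t (j, i)) [0..<m j] else []) *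
             (\<Prod>p\<in>{(j, i). j < k \<and> i < m j}. ennreal (mu (fst p) (t p)))
         \<partial>PiM {(j, i). j < k \<and> i < m j} (\<lambda>_. restrict_space lborel {0..T}))
     = ennreal E0 * (\<Prod>j<k. ennreal (integral {0..T} (\<lambda>t. phi j t * mu j t)) ^ m j)"
proof -
  define I where "I = {(j, i). j < k \<and> i < m j}"
  have "finite I"
    by (rule finite_subset[of _ "Sigma {..<k} (\<lambda>j. {..<m j})"]) (auto simp: I_def)
  have "(\<integral>\<^sup>+ t. F (\<lambda>j. if j < k then map (\<lambda>i. t (j, i)) [0..<m j] else []) *
               (\<Prod>p\<in>I. ennreal (mu (fst p) (t p))) \<partial>PiM I (\<lambda>_. restrict_space lborel {0..T}))
      = (\<integral>\<^sup>+ t. ennreal E0 * (\<Prod>p\<in>I. ennreal (phi (fst p) (t p) * mu (fst p) (t p)))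
           \<partial>PiM I (\<lambda>_. restrict_space lborel {0..T}))"
    unfolding I_def
    by (intro nn_integral_cong product_functional_integrand) (auto simp: space_PiM PiE_def Pi_def)
  also have "\<dots> = ennreal E0 * (\<Prod>p\<in>I. ennreal (integral {0..T} (\<lambda>t. phi (fst p) t * mu (fst p) t)))"
    using \<open>finite I\<close> mu_cont phi_cont mu_nonneg phi_nonneg
    by (subst nn_integral_PiM_interval_prod) (auto simp: I_def intro!: continuous_on_mult)
  also have "\<dots> = ennreal E0 * (\<Prod>j<k. ennreal (integral {0..T} (\<lambda>t. phi j t * mu j t)) ^ m j)"
    using prod_points_eq_prod_prod[of "\<lambda>j i. ennreal (integral {0..T} (\<lambda>t. phi j t * mu j t))" k m]
    by (simp add: I_def)
  finally show ?thesis unfolding I_def .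
qed

lemma pp_expect_product_functional:
  "pp_expect k T mu F =
     ennreal (E0 * (\<Prod>j<k. exp (integral {0..T} (\<lambda>t. phi j t * mu j t) - integral {0..T} (mu j))))"
proof -
  define A where "A j = integral {0..T} (\<lambda>t. phi j t * mu j t)" for j
  define L where "L j = integral {0..T} (mu j)" for j
  have A_nonneg: "0 \<le> A j" if "j < k" for j
    unfolding A_def using that mu_nonneg phi_nonneg mu_cont phi_cont
    by (intro integral_nonneg integrable_continuous_interval continuous_on_mult) auto
  have "(\<Prod>j<k. ennreal (exp (- L j) / fact (m j))) * (ennreal E0 * (\<Prod>j<k. ennreal (A j) ^ m j))
      = ennreal E0 * (\<Prod>j<k. ennreal (exp (- L j) * A j ^ m j / fact (m j)))" for m :: "nat \<Rightarrow> nat"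
  proof -
    have "(\<Prod>j<k. ennreal (exp (- L j) / fact (m j))) * (\<Prod>j<k. ennreal (A j) ^ m j)
        = (\<Prod>j<k. ennreal (exp (- L j) * A j ^ m j / fact (m j)))"
      unfolding prod.distrib[symmetric] using A_nonneg
      by (intro prod.cong) (auto simp: ennreal_mult'' ennreal_power[symmetric] divide_inverse mult_ac)
    then show ?thesis by (simp only: mult.left_commute[of _ "ennreal E0"])
  qed
  then have "pp_expect k T mu F
      = (\<integral>\<^sup>+ m. ennreal E0 * (\<Prod>j<k. ennreal (exp (- L j) * A j ^ m j / fact (m j)))
          \<partial>count_space (PiE {..<k} (\<lambda>_. UNIV)))"
    unfolding pp_expect_def nn_integral_product_functional A_def[symmetric] L_def[symmetric] by simp
  also have "\<dots> = ennreal E0 * (\<Prod>j<k. ennreal (exp (- L j) * exp (A j)))"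
    using A_nonneg
    by (simp add: nn_integral_cmult nn_integral_exp_series
        nn_integral_count_space_PiE_prod[where f = "\<lambda>j n. ennreal (exp (- L j) * A j ^ n / fact n)"])
  also have "\<dots> = ennreal E0 * ennreal (\<Prod>j<k. exp (A j - L j))"
    by (subst prod_ennreal) (simp_all add: exp_diff exp_minus divide_inverse mult.commute)
  also have "\<dots> = ennreal (E0 * (\<Prod>j<k. exp (A j - L j)))"
    using E0_nonneg by (simp add: ennreal_mult prod_nonneg)
  finally show ?thesis unfolding A_def L_def .
qed

end

section \<open>Signals with an onset\<close>

text \<open>The window \<open>[-\<beta>, T - \<alpha>]\<close> contains every \<open>t - \<tau>\<close> with \<open>t \<in> [0,T]\<close> and delay
  \<open>\<tau> \<in> [\<alpha>, \<beta>]\<close>.\<close>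

locale onset_signal =
  fixes f :: "real \<Rightarrow> real" and \<alpha> \<beta> T :: real
  assumes delay_bounds: "0 < \<alpha>" "\<alpha> \<le> \<beta>" "\<beta> < T"
    and zero_before_onset: "\<And>s. s \<in> {-\<beta>..0} \<Longrightarrow> f s = 0"
    and pos_after_onset: "\<And>s. s \<in> {0<..T-\<alpha>} \<Longrightarrow> 0 < f s"
    and continuous: "continuous_on {-\<beta>..T-\<alpha>} f"
begin

lemma nonneg: "s \<in> {-\<beta>..T-\<alpha>} \<Longrightarrow> 0 \<le> f s"
  using zero_before_onset[of s] pos_after_onset[of s] by (cases "s \<le> 0") auto

lemma shifted_continuous: "\<tau> \<in> {\<alpha>..\<beta>} \<Longrightarrow> continuous_on {0..T} (\<lambda>t. f (t - \<tau>))"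
  by (rule continuous_on_compose2[OF continuous]) (auto intro!: continuous_intros)

lemma shifted_nonneg: "\<tau> \<in> {\<alpha>..\<beta>} \<Longrightarrow> t \<in> {0..T} \<Longrightarrow> 0 \<le> f (t - \<tau>)"
  by (rule nonneg) auto

lemma shifted_zero: "\<tau> \<in> {\<alpha>..\<beta>} \<Longrightarrow> t \<in> {0..\<tau>} \<Longrightarrow> f (t - \<tau>) = 0"
  by (rule zero_before_onset) auto

lemma integral_shifted:
  assumes "\<tau> \<in> {\<alpha>..\<beta>}"
  shows "integral {\<tau>..T} (\<lambda>t. f (t - \<tau>)) = integral {0..T} (\<lambda>t. f (t - \<tau>))"
proof -
  have "\<tau> \<in> {0..T}" using assms delay_bounds by auto
  then have "integral {0..\<tau>} (\<lambda>t. f (t - \<tau>)) + integral {\<tau>..T} (\<lambda>t. f (t - \<tau>))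
      = integral {0..T} (\<lambda>t. f (t - \<tau>))"
    using integrable_continuous_interval[OF shifted_continuous[OF assms]]
    by (intro Henstock_Kurzweil_Integration.integral_combine) auto
  moreover have "integral {0..\<tau>} (\<lambda>t. f (t - \<tau>)) = integral {0..\<tau>} (\<lambda>_. 0)"
    using shifted_zero[OF assms] by (intro integral_cong) auto
  ultimately show ?thesis by simp
qed

lemma sqrt_offset: "0 < l0 \<Longrightarrow> onset_signal (\<lambda>s. sqrt (f s + l0) - sqrt l0) \<alpha> \<beta> T"
  using delay_bounds zero_before_onset pos_after_onset continuous
  by unfold_locales (auto intro!: continuous_intros)

end

section \<open>The Hellinger affinity of two source positions\<close>

definition hellinger_shift :: "(real \<Rightarrow> real) \<Rightarrow> real \<Rightarrow> real \<Rightarrow> real \<Rightarrow> real \<Rightarrow> real" where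
  "hellinger_shift f l0 T \<tau> \<sigma> =
     integral {0..T} (\<lambda>t. (sqrt (f (t - \<tau>) + l0) - sqrt (f (t - \<sigma>) + l0))\<^sup>2)"

lemma sqrt_ratio_affinity:
  fixes x y n :: real
  assumes "0 \<le> x" "0 < y"
  shows "sqrt (x / y) * (n * y) - n * y - n * (x - y) / 2 = - (n / 2) * (sqrt x - sqrt y)\<^sup>2"
proof -
  have "sqrt (x / y) * y = sqrt x * (y / sqrt y)"
    by (simp add: real_sqrt_divide)
  also have "\<dots> = sqrt x * sqrt y"
    using assms by (simp add: real_div_sqrt)
  finally have "sqrt (x / y) * (n * y) = n * (sqrt x * sqrt y)"
    by (metis mult.left_commute)
  moreover have "(sqrt x - sqrt y)\<^sup>2 = x + y - 2 * (sqrt x * sqrt y)"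
    using assms by (simp add: power2_eq_square algebra_simps)
  ultimately show ?thesis
    by (simp only:) (simp add: field_simps)
qed

lemma exp_half_ln_ratio:
  fixes x y l0 :: real
  assumes "0 \<le> x" "0 \<le> y" "0 < l0"
  shows "exp ((ln (1 + x / l0) - ln (1 + y / l0)) / 2) = sqrt ((x + l0) / (y + l0))"
proof -
  have "1 + x / l0 = (x + l0) / l0" "1 + y / l0 = (y + l0) / l0"
    using assms by (simp_all add: field_simps)
  then have "ln (1 + x / l0) - ln (1 + y / l0) = ln ((x + l0) / (y + l0))"
    using assms by (simp add: ln_div add_nonneg_pos)
  moreover have "exp (ln z / 2) = sqrt z" if "0 < z" for z :: real
    using that by (simp add: powr_half_sqrt[symmetric] powr_def)
  ultimately show ?thesis
    using assms by (simp add: add_nonneg_pos)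
qed

context onset_signal
begin

text \<open>The left-hand side is the exponent contributed by one detector when
  \<open>pp_expect_product_functional\<close> is applied to the square root of the likelihood ratio.\<close>

lemma hellinger_shift_eq:
  assumes "\<tau> \<in> {\<alpha>..\<beta>}" "\<sigma> \<in> {\<alpha>..\<beta>}" "0 < l0"
  shows "integral {0..T} (\<lambda>t. sqrt ((f (t - \<tau>) + l0) / (f (t - \<sigma>) + l0)) * (n * f (t - \<sigma>) + n * l0))
       - integral {0..T} (\<lambda>t. n * f (t - \<sigma>) + n * l0)
       - n * (integral {\<tau>..T} (\<lambda>t. f (t - \<tau>)) - integral {\<sigma>..T} (\<lambda>t. f (t - \<sigma>))) / 2
     = - (n / 2) * hellinger_shift f l0 T \<tau> \<sigma>"
proof -
  define a where "a t = f (t - \<tau>)" for t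
  define b where "b t = f (t - \<sigma>)" for t
  have cont: "continuous_on {0..T} a" "continuous_on {0..T} b"
    unfolding a_def b_def using assms by (auto intro: shifted_continuous)
  have ab_nonneg: "0 \<le> a t" "0 \<le> b t" if "t \<in> {0..T}" for t
    unfolding a_def b_def using assms that by (auto intro: shifted_nonneg)
  then have denom: "\<forall>t\<in>{0..T}. b t + l0 \<noteq> 0"
    using \<open>0 < l0\<close> by (metis add_nonneg_pos less_irrefl)
  have integrable: "g integrable_on {0..T}" if "continuous_on {0..T} g" for g :: "real \<Rightarrow> real"
    using that by (rule integrable_continuous_interval)
  have "integral {0..T} (\<lambda>t. sqrt ((a t + l0) / (b t + l0)) * (n * b t + n * l0))
        - integral {0..T} (\<lambda>t. n * b t + n * l0) - n * (integral {0..T} a - integral {0..T} b) / 2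
      = integral {0..T} (\<lambda>t. sqrt ((a t + l0) / (b t + l0)) * (n * b t + n * l0)
          - (n * b t + n * l0) - n * (a t - b t) / 2)"
    using cont denom
    by (simp add: integral_diff integral_mult_right integral_divide integrable
        continuous_intros continuous_on_divide)
  also have "\<dots> = integral {0..T} (\<lambda>t. - (n / 2) * (sqrt (a t + l0) - sqrt (b t + l0))\<^sup>2)"
  proof (intro integral_cong)
    fix t assume "t \<in> {0..T}"
    then have "sqrt ((a t + l0) / (b t + l0)) * (n * (b t + l0)) - n * (b t + l0)
        - n * ((a t + l0) - (b t + l0)) / 2 = - (n / 2) * (sqrt (a t + l0) - sqrt (b t + l0))\<^sup>2"
      using ab_nonneg \<open>0 < l0\<close> by (intro sqrt_ratio_affinity) (auto simp: add_nonneg_pos)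
    then show "sqrt ((a t + l0) / (b t + l0)) * (n * b t + n * l0) - (n * b t + n * l0)
        - n * (a t - b t) / 2 = - (n / 2) * (sqrt (a t + l0) - sqrt (b t + l0))\<^sup>2"
      by (simp add: distrib_left)
  qed
  finally show ?thesis
    using assms by (simp add: hellinger_shift_def integral_shifted a_def[abs_def] b_def[abs_def])
qed

end

lemma loglik_points:
  fixes t :: "nat \<times> nat \<Rightarrow> real"
  assumes points: "\<And>j i. j < k \<Longrightarrow> i < m j \<Longrightarrow> t (j, i) \<in> {0..T}"
    and silent: "\<And>j s. j < k \<Longrightarrow> s \<in> {0..T} \<Longrightarrow> s < tau \<nu> (dp j) \<theta> \<Longrightarrow> lam j (s - tau \<nu> (dp j) \<theta>) = 0"
  shows "loglik n T \<nu> l0 lam dp k \<theta> (\<lambda>j. if j < k then map (\<lambda>i. t (j, i)) [0..<m j] else [])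
     = (\<Sum>j<k. \<Sum>i<m j. ln (1 + lam j (t (j, i) - tau \<nu> (dp j) \<theta>) / l0))
       - real n * (\<Sum>j<k. integral {tau \<nu> (dp j) \<theta>..T} (\<lambda>s. lam j (s - tau \<nu> (dp j) \<theta>)))"
  unfolding loglik_def
proof (intro arg_cong2[where f = "(-)"] refl sum.cong)
  fix j assume "j \<in> {..<k}"
  then show "sum_list (map (\<lambda>s. if tau \<nu> (dp j) \<theta> \<le> s \<and> s \<le> T
                                then ln (1 + lam j (s - tau \<nu> (dp j) \<theta>) / l0) else 0)
               (if j < k then map (\<lambda>i. t (j, i)) [0..<m j] else []))
      = (\<Sum>i<m j. ln (1 + lam j (t (j, i) - tau \<nu> (dp j) \<theta>) / l0))"
    using points silent
    by (auto simp: interv_sum_list_conv_sum_set_nat atLeast0LessThan not_le intro!: sum.cong)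
qed

context
  fixes k :: nat and T l0 \<nu> :: real and lam :: "nat \<Rightarrow> real \<Rightarrow> real" and dp :: "nat \<Rightarrow> real^2"
    and a b :: "nat \<Rightarrow> real" and \<theta> \<theta>0 :: "real^2"
  assumes signals: "\<And>j. j < k \<Longrightarrow> onset_signal (lam j) (a j) (b j) T"
    and delays: "\<And>j. j < k \<Longrightarrow> tau \<nu> (dp j) \<theta> \<in> {a j..b j}"
                "\<And>j. j < k \<Longrightarrow> tau \<nu> (dp j) \<theta>0 \<in> {a j..b j}"
    and l0_pos: "0 < l0"
begin

lemma exp_half_loglik_diff_points:
  assumes points: "\<And>j i. j < k \<Longrightarrow> i < m j \<Longrightarrow> t (j, i) \<in> {0..T}"
  shows "exp ((loglik n T \<nu> l0 lam dp k \<theta> (\<lambda>j. if j < k then map (\<lambda>i. t (j, i)) [0..<m j] else [])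
             - loglik n T \<nu> l0 lam dp k \<theta>0 (\<lambda>j. if j < k then map (\<lambda>i. t (j, i)) [0..<m j] else [])) / 2)
    = exp (- (real n / 2) * (\<Sum>j<k. integral {tau \<nu> (dp j) \<theta>..T} (\<lambda>s. lam j (s - tau \<nu> (dp j) \<theta>))
                                   - integral {tau \<nu> (dp j) \<theta>0..T} (\<lambda>s. lam j (s - tau \<nu> (dp j) \<theta>0))))
      * (\<Prod>j<k. \<Prod>i<m j. sqrt ((lam j (t (j, i) - tau \<nu> (dp j) \<theta>) + l0)
                                / (lam j (t (j, i) - tau \<nu> (dp j) \<theta>0) + l0)))"
    (is "exp ((?L \<theta> - ?L \<theta>0) / 2) = exp (- (real n / 2) * ?D) * ?P")
proof -
  define ll where "ll j i x = ln (1 + lam j (t (j, i) - tau \<nu> (dp j) x) / l0)" for j i x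
  have loglik: "?L x = (\<Sum>j<k. \<Sum>i<m j. ll j i x)
      - real n * (\<Sum>j<k. integral {tau \<nu> (dp j) x..T} (\<lambda>s. lam j (s - tau \<nu> (dp j) x)))"
    if "\<And>j. j < k \<Longrightarrow> tau \<nu> (dp j) x \<in> {a j..b j}" for x
    unfolding ll_def
    by (rule loglik_points[where k = k and m = m and t = t and T = T, OF points])
      (use onset_signal.shifted_zero[OF signals that] in auto)
  have half: "(?L \<theta> - ?L \<theta>0) / 2 = - (real n / 2) * ?D + (\<Sum>j<k. \<Sum>i<m j. (ll j i \<theta> - ll j i \<theta>0) / 2)"
    using delays
    by (simp add: loglik sum_subtractf right_diff_distrib diff_divide_distrib sum_divide_distrib)
  have "exp ((ll j i \<theta> - ll j i \<theta>0) / 2)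
      = sqrt ((lam j (t (j, i) - tau \<nu> (dp j) \<theta>) + l0) / (lam j (t (j, i) - tau \<nu> (dp j) \<theta>0) + l0))"
    if "j < k" "i < m j" for j i
    unfolding ll_def using points[OF that] l0_pos
      onset_signal.shifted_nonneg[OF signals[OF that(1)] delays(1)[OF that(1)]]
      onset_signal.shifted_nonneg[OF signals[OF that(1)] delays(2)[OF that(1)]]
    by (intro exp_half_ln_ratio) auto
  then have "(\<Prod>j<k. \<Prod>i<m j. exp ((ll j i \<theta> - ll j i \<theta>0) / 2)) = ?P"
    by (intro prod.cong refl) auto
  then show ?thesis
    unfolding half exp_add by (simp add: exp_sum)
qed

lemma pp_expect_sqrt_likelihood_ratio:
  "pp_expect k T (\<lambda>j t. real n * lam j (t - tau \<nu> (dp j) \<theta>0) + real n * l0)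
     (\<lambda>X. ennreal (exp ((loglik n T \<nu> l0 lam dp k \<theta> X - loglik n T \<nu> l0 lam dp k \<theta>0 X) / 2)))
   = ennreal (exp (- (real n / 2) *
       (\<Sum>j<k. hellinger_shift (lam j) l0 T (tau \<nu> (dp j) \<theta>) (tau \<nu> (dp j) \<theta>0))))"
proof -
  define \<tau> where "\<tau> j = tau \<nu> (dp j) \<theta>" for j
  define \<sigma> where "\<sigma> j = tau \<nu> (dp j) \<theta>0" for j
  define mu where "mu j t = real n * lam j (t - \<sigma> j) + real n * l0" for j t
  define phi where "phi j t = sqrt ((lam j (t - \<tau> j) + l0) / (lam j (t - \<sigma> j) + l0))" for j t
  define D where "D j = integral {\<tau> j..T} (\<lambda>s. lam j (s - \<tau> j)) - integral {\<sigma> j..T} (\<lambda>s. lam j (s - \<sigma> j))"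
    for j
  define E0 where "E0 = exp (- (real n / 2) * (\<Sum>j<k. D j))"
  have \<tau>: "\<tau> j \<in> {a j..b j}" and \<sigma>: "\<sigma> j \<in> {a j..b j}" if "j < k" for j
    using delays that by (auto simp: \<tau>_def \<sigma>_def)
  note cont = onset_signal.shifted_continuous[OF signals]
  note nonneg = onset_signal.shifted_nonneg[OF signals]
  have "pp_expect k T mu (\<lambda>X. ennreal (exp ((loglik n T \<nu> l0 lam dp k \<theta> X - loglik n T \<nu> l0 lam dp k \<theta>0 X) / 2)))
      = ennreal (E0 * (\<Prod>j<k. exp (integral {0..T} (\<lambda>t. phi j t * mu j t) - integral {0..T} (mu j))))"
  proof (rule pp_expect_product_functional)
    fix j assume "j < k"
    have "\<forall>t\<in>{0..T}. lam j (t - \<sigma> j) + l0 \<noteq> 0"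
      using nonneg[OF \<open>j < k\<close> \<sigma>[OF \<open>j < k\<close>]] l0_pos by (metis add_nonneg_pos less_irrefl)
    then show "continuous_on {0..T} (mu j)" "continuous_on {0..T} (phi j)"
      unfolding mu_def phi_def using cont[OF \<open>j < k\<close> \<tau>[OF \<open>j < k\<close>]] cont[OF \<open>j < k\<close> \<sigma>[OF \<open>j < k\<close>]]
      by (auto intro!: continuous_intros continuous_on_divide)
  next
    fix j t assume "j < k" "t \<in> {0..T}"
    then show "0 \<le> mu j t" "0 \<le> phi j t"
      using nonneg[OF \<open>j < k\<close> \<tau>] nonneg[OF \<open>j < k\<close> \<sigma>] l0_pos by (simp_all add: mu_def phi_def)
  next
    fix m :: "nat \<Rightarrow> nat" and t :: "nat \<times> nat \<Rightarrow> real"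
    assume "\<And>j i. j < k \<Longrightarrow> i < m j \<Longrightarrow> t (j, i) \<in> {0..T}"
    then show "ennreal (exp ((loglik n T \<nu> l0 lam dp k \<theta> (\<lambda>j. if j < k then map (\<lambda>i. t (j, i)) [0..<m j] else [])
                 - loglik n T \<nu> l0 lam dp k \<theta>0 (\<lambda>j. if j < k then map (\<lambda>i. t (j, i)) [0..<m j] else [])) / 2))
        = ennreal (E0 * (\<Prod>j<k. \<Prod>i<m j. phi j (t (j, i))))"
      by (simp add: exp_half_loglik_diff_points E0_def D_def phi_def \<tau>_def \<sigma>_def)
  qed (simp add: E0_def)
  also have "\<dots> = ennreal (exp (- (real n / 2) * (\<Sum>j<k. hellinger_shift (lam j) l0 T (\<tau> j) (\<sigma> j))))"
  proof -
    have "integral {0..T} (\<lambda>t. phi j t * mu j t) - integral {0..T} (mu j) - real n * D j / 2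
        = - (real n / 2) * hellinger_shift (lam j) l0 T (\<tau> j) (\<sigma> j)" if "j < k" for j
      using onset_signal.hellinger_shift_eq[OF signals[OF that] \<tau>[OF that] \<sigma>[OF that] l0_pos, of "real n"]
      by (simp add: phi_def mu_def[abs_def] D_def)
    then have "(\<Sum>j<k. integral {0..T} (\<lambda>t. phi j t * mu j t) - integral {0..T} (mu j) - real n * D j / 2)
        = - (real n / 2) * (\<Sum>j<k. hellinger_shift (lam j) l0 T (\<tau> j) (\<sigma> j))"
      by (simp add: sum_distrib_left)
    then show ?thesis
      by (simp add: E0_def exp_sum[symmetric] exp_add[symmetric] sum_subtractf sum_distrib_left
          sum_divide_distrib sum_negf)
  qed
  finally show ?thesis by (simp add: mu_def[abs_def] \<tau>_def \<sigma>_def)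
qed

end

section \<open>Shifted signals are separated in \<open>L\<^sup>2\<close>\<close>

lemma integral_ge_on_subinterval:
  fixes g :: "real \<Rightarrow> real"
  assumes "a \<le> b" "c \<le> a" "b \<le> d" "continuous_on {c..d} g"
    and "\<And>t. t \<in> {c..d} \<Longrightarrow> 0 \<le> g t" "\<And>t. t \<in> {a..b} \<Longrightarrow> m \<le> g t"
  shows "(b - a) * m \<le> integral {c..d} g"
proof -
  have "continuous_on {a..b} g"
    using assms by (auto intro: continuous_on_subset)
  then have "(b - a) * m \<le> integral {a..b} g"
    using assms integral_le[of "\<lambda>_. m" "{a..b}" g] by (simp add: integrable_continuous_interval)
  also have "\<dots> \<le> integral {c..d} g"
    using assms \<open>continuous_on {a..b} g\<close>
    by (intro integral_subset_le) (auto simp: integrable_continuous_interval)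
  finally show ?thesis .
qed

lemma uniformly_increasing_subinterval:
  fixes f f' :: "real \<Rightarrow> real"
  assumes "a < b" "f a < f b"
    and deriv: "\<And>s. s \<in> {a..b} \<Longrightarrow> (f has_real_derivative f' s) (at s)"
    and "continuous_on {a..b} f'"
  obtains \<xi> \<rho> \<eta> where "a < \<xi> - \<rho>" "\<xi> + \<rho> < b" "0 < \<rho>" "0 < \<eta>"
    "\<And>x y. \<xi> - \<rho> \<le> y \<Longrightarrow> y \<le> x \<Longrightarrow> x \<le> \<xi> + \<rho> \<Longrightarrow> \<eta> * (x - y) \<le> f x - f y"
proof -
  obtain \<xi> where \<xi>: "a < \<xi>" "\<xi> < b" "f b - f a = (b - a) * f' \<xi>"
    using MVT2[of a b f f'] assms(1) deriv by auto
  define \<eta> where "\<eta> = f' \<xi> / 2"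
  have "0 < (b - a) * f' \<xi>"
    using \<xi>(3) assms(2) by linarith
  then have "0 < \<eta>"
    using assms(1) by (simp add: \<eta>_def zero_less_mult_iff)
  obtain \<rho>0 where "0 < \<rho>0" and \<rho>0: "\<And>s. s \<in> {a..b} \<Longrightarrow> dist s \<xi> < \<rho>0 \<Longrightarrow> dist (f' s) (f' \<xi>) < \<eta>"
    using \<open>continuous_on {a..b} f'\<close> \<xi> \<open>0 < \<eta>\<close> unfolding continuous_on_iff
    by (metis atLeastAtMost_iff less_imp_le)
  define \<rho> where "\<rho> = min (\<rho>0 / 2) (min ((\<xi> - a) / 2) ((b - \<xi>) / 2))"
  have \<rho>: "0 < \<rho>" "\<rho> < \<rho>0" "a < \<xi> - \<rho>" "\<xi> + \<rho> < b"
    using \<open>0 < \<rho>0\<close> \<xi>(1,2) by (auto simp: \<rho>_def min_def field_simps)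
  have f'_ge: "\<eta> \<le> f' s" if "\<xi> - \<rho> \<le> s" "s \<le> \<xi> + \<rho>" for s
  proof -
    have "\<bar>f' s - f' \<xi>\<bar> < \<eta>"
      using \<rho>0[of s] that \<rho> by (simp add: dist_real_def)
    then show ?thesis unfolding \<eta>_def by linarith
  qed
  show ?thesis
  proof (rule that[OF \<rho>(3,4,1) \<open>0 < \<eta>\<close>])
    fix x y assume xy: "\<xi> - \<rho> \<le> y" "y \<le> x" "x \<le> \<xi> + \<rho>"
    show "\<eta> * (x - y) \<le> f x - f y"
    proof (cases "y = x")
      case False
      then obtain z where z: "y < z" "z < x" "f x - f y = (x - y) * f' z"
        using MVT2[of y x f f'] xy \<rho> deriv by force
      then show ?thesis
        using f'_ge[of z] xy by (simp add: mult.commute mult_left_mono)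
    qed simp
  qed
qed

context onset_signal
begin

lemma shift_L2_ge_increase:
  assumes "0 < \<xi> - \<rho>" "\<xi> + \<rho> \<le> T - \<beta>" "0 \<le> \<eta>"
    and increase: "\<And>x y. \<xi> - \<rho> \<le> y \<Longrightarrow> y \<le> x \<Longrightarrow> x \<le> \<xi> + \<rho> \<Longrightarrow> \<eta> * (x - y) \<le> f x - f y"
    and \<tau>: "\<tau> \<in> {\<alpha>..\<beta>}" "\<tau>' \<in> {\<alpha>..\<beta>}" "\<tau> \<le> \<tau>'" "\<tau>' - \<tau> \<le> \<rho> / 2"
  shows "\<rho> * \<eta>\<^sup>2 * (\<tau>' - \<tau>)\<^sup>2 \<le> integral {0..T} (\<lambda>t. (f (t - \<tau>) - f (t - \<tau>'))\<^sup>2)"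
proof -
  have "((\<tau> + \<xi> + \<rho>/2) - (\<tau> + \<xi> - \<rho>/2)) * (\<eta> * (\<tau>' - \<tau>))\<^sup>2
      \<le> integral {0..T} (\<lambda>t. (f (t - \<tau>) - f (t - \<tau>'))\<^sup>2)"
  proof (rule integral_ge_on_subinterval)
    fix t assume t: "t \<in> {\<tau> + \<xi> - \<rho>/2..\<tau> + \<xi> + \<rho>/2}"
    have "\<eta> * (\<tau>' - \<tau>) \<le> f (t - \<tau>) - f (t - \<tau>')"
      using increase[of "t - \<tau>'" "t - \<tau>"] t \<tau> by simp
    then show "(\<eta> * (\<tau>' - \<tau>))\<^sup>2 \<le> (f (t - \<tau>) - f (t - \<tau>'))\<^sup>2"
      using assms(3) \<tau>(3) by (intro power_mono) auto
  qed (use assms delay_bounds shifted_continuous in \<open>auto intro!: continuous_intros\<close>)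
  then show ?thesis
    by (simp add: power_mult_distrib mult.assoc)
qed

lemma shift_L2_ge_onset:
  assumes "0 < r" "\<beta> + r / 2 \<le> T" "0 \<le> m" "\<And>s. s \<in> {r/4..r/2} \<Longrightarrow> m \<le> f s"
    and \<tau>: "\<tau> \<in> {\<alpha>..\<beta>}" "\<tau>' \<in> {\<alpha>..\<beta>}" "r / 2 < \<tau>' - \<tau>"
  shows "r * m\<^sup>2 / 4 \<le> integral {0..T} (\<lambda>t. (f (t - \<tau>) - f (t - \<tau>'))\<^sup>2)"
proof -
  have "(\<tau> + r/2 - (\<tau> + r/4)) * m\<^sup>2 \<le> integral {0..T} (\<lambda>t. (f (t - \<tau>) - f (t - \<tau>'))\<^sup>2)"
  proof (rule integral_ge_on_subinterval)
    fix t assume t: "t \<in> {\<tau> + r/4..\<tau> + r/2}"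
    have "f (t - \<tau>') = 0"
      using zero_before_onset[of "t - \<tau>'"] t \<tau> delay_bounds by auto
    moreover have "m \<le> f (t - \<tau>)"
      using assms(4) t by auto
    ultimately show "m\<^sup>2 \<le> (f (t - \<tau>) - f (t - \<tau>'))\<^sup>2"
      using assms(3) by (simp add: power_mono)
  qed (use assms delay_bounds shifted_continuous in \<open>auto intro!: continuous_intros\<close>)
  then show ?thesis by simp
qed

text \<open>Small shifts are detected where \<open>f\<close> increases at a uniform rate, large ones at the
  onset, where one of the two copies still vanishes and the other does not.\<close>

lemma shift_L2_lower_bound:
  assumes deriv: "\<And>s. s \<in> {-\<beta><..<T-\<alpha>} \<Longrightarrow> (f has_real_derivative f' s) (at s)"
    and f'_cont: "continuous_on {-\<beta><..<T-\<alpha>} f'"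
  shows "\<exists>c>0. \<forall>\<tau>\<in>{\<alpha>..\<beta>}. \<forall>\<tau>'\<in>{\<alpha>..\<beta>}.
           c * (\<tau> - \<tau>')\<^sup>2 \<le> integral {0..T} (\<lambda>t. (f (t - \<tau>) - f (t - \<tau>'))\<^sup>2)"
proof -
  define D where "D = (T - \<beta>) / 2"
  have D: "0 < D" "D < T - \<alpha>"
    using delay_bounds by (auto simp: D_def)
  have "f 0 < f D"
    using zero_before_onset[of 0] pos_after_onset[of D] delay_bounds D by auto
  moreover have "continuous_on {0..D} f'"
    using D delay_bounds by (auto intro: continuous_on_subset[OF f'_cont])
  moreover have "\<And>s. s \<in> {0..D} \<Longrightarrow> (f has_real_derivative f' s) (at s)"
    using D delay_bounds by (intro deriv) auto
  ultimately obtain \<xi> \<rho> \<eta> where \<rho>: "0 < \<xi> - \<rho>" "\<xi> + \<rho> < D" "0 < \<rho>" and "0 < \<eta>"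
    and increase: "\<And>x y. \<xi> - \<rho> \<le> y \<Longrightarrow> y \<le> x \<Longrightarrow> x \<le> \<xi> + \<rho> \<Longrightarrow> \<eta> * (x - y) \<le> f x - f y"
    using uniformly_increasing_subinterval[of 0 D f f'] D by blast
  have "continuous_on {\<rho>/4..\<rho>/2} f"
    using \<rho> D delay_bounds by (auto intro: continuous_on_subset[OF continuous])
  then obtain s0 where s0: "s0 \<in> {\<rho>/4..\<rho>/2}" and min: "\<And>s. s \<in> {\<rho>/4..\<rho>/2} \<Longrightarrow> f s0 \<le> f s"
    using continuous_attains_inf[of "{\<rho>/4..\<rho>/2}" f] \<rho> by auto
  have "0 < f s0"
    using s0 pos_after_onset \<rho> D by auto
  define c where "c = min (\<rho> * \<eta>\<^sup>2) (\<rho> * (f s0)\<^sup>2 / (4 * \<beta>\<^sup>2))"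
  have "0 < c"
    using \<rho> \<open>0 < \<eta>\<close> \<open>0 < f s0\<close> delay_bounds by (auto simp: c_def)
  have ordered: "c * (\<tau>' - \<tau>)\<^sup>2 \<le> integral {0..T} (\<lambda>t. (f (t - \<tau>) - f (t - \<tau>'))\<^sup>2)"
    if \<tau>: "\<tau> \<in> {\<alpha>..\<beta>}" "\<tau>' \<in> {\<alpha>..\<beta>}" "\<tau> \<le> \<tau>'" for \<tau> \<tau>'
  proof (cases "\<tau>' - \<tau> \<le> \<rho> / 2")
    case True
    have "c * (\<tau>' - \<tau>)\<^sup>2 \<le> \<rho> * \<eta>\<^sup>2 * (\<tau>' - \<tau>)\<^sup>2"
      by (intro mult_right_mono) (auto simp: c_def)
    also have "\<dots> \<le> integral {0..T} (\<lambda>t. (f (t - \<tau>) - f (t - \<tau>'))\<^sup>2)"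
      using \<rho> D \<open>0 < \<eta>\<close> True \<tau> by (intro shift_L2_ge_increase increase) (auto simp: D_def)
    finally show ?thesis .
  next
    case False
    have "(\<tau>' - \<tau>)\<^sup>2 \<le> \<beta>\<^sup>2"
      using \<tau> delay_bounds by (intro power_mono) auto
    then have "c * (\<tau>' - \<tau>)\<^sup>2 \<le> \<rho> * (f s0)\<^sup>2 / (4 * \<beta>\<^sup>2) * \<beta>\<^sup>2"
      using \<open>0 < c\<close> by (intro mult_mono) (auto simp: c_def)
    also have "\<dots> = \<rho> * (f s0)\<^sup>2 / 4"
      using delay_bounds by simp
    also have "\<dots> \<le> integral {0..T} (\<lambda>t. (f (t - \<tau>) - f (t - \<tau>'))\<^sup>2)"
      using \<rho> D False \<tau> min \<open>0 < f s0\<close> by (intro shift_L2_ge_onset) (auto simp: D_def)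
    finally show ?thesis .
  qed
  show ?thesis
  proof (intro exI[of _ c] conjI ballI \<open>0 < c\<close>)
    fix \<tau> \<tau>' assume "\<tau> \<in> {\<alpha>..\<beta>}" "\<tau>' \<in> {\<alpha>..\<beta>}"
    then show "c * (\<tau> - \<tau>')\<^sup>2 \<le> integral {0..T} (\<lambda>t. (f (t - \<tau>) - f (t - \<tau>'))\<^sup>2)"
      using ordered[of \<tau> \<tau>'] ordered[of \<tau>' \<tau>] by (cases "\<tau> \<le> \<tau>'") (simp_all add: power2_commute)
  qed
qed

lemma hellinger_shift_lower_bound:
  assumes deriv: "\<And>s. s \<in> {-\<beta>..T-\<alpha>} \<Longrightarrow> (f has_real_derivative f' s) (at s within {-\<beta>..T-\<alpha>})"
    and f'_cont: "continuous_on {-\<beta>..T-\<alpha>} f'"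
    and "0 < l0"
  shows "\<exists>c>0. \<forall>\<tau>\<in>{\<alpha>..\<beta>}. \<forall>\<sigma>\<in>{\<alpha>..\<beta>}. c * (\<tau> - \<sigma>)\<^sup>2 \<le> hellinger_shift f l0 T \<tau> \<sigma>"
proof -
  interpret sqrt_signal: onset_signal "\<lambda>s. sqrt (f s + l0) - sqrt l0" \<alpha> \<beta> T
    using sqrt_offset[OF \<open>0 < l0\<close>] .
  have pos: "0 < f s + l0" if "s \<in> {-\<beta><..<T-\<alpha>}" for s
    using nonneg[of s] that \<open>0 < l0\<close> by auto
  have "((\<lambda>s. sqrt (f s + l0) - sqrt l0) has_real_derivative f' s / (2 * sqrt (f s + l0))) (at s)"
    if s: "s \<in> {-\<beta><..<T-\<alpha>}" for s
  proof -
    have "(f has_real_derivative f' s) (at s)"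
      using deriv[of s] s at_within_interior[of s "{-\<beta>..T-\<alpha>}"] by auto
    then have "((\<lambda>s. sqrt (f s + l0) - sqrt l0) has_real_derivative
        inverse (sqrt (f s + l0)) / 2 * (f' s + 0) - 0) (at s)"
      by (intro DERIV_diff DERIV_chain2[where g = "\<lambda>s. f s + l0", OF DERIV_real_sqrt[OF pos[OF s]]]
          DERIV_add DERIV_const)
    then show ?thesis
      by (simp only: add_0_right diff_0_right divide_inverse inverse_mult_distrib mult_ac)
  qed
  moreover have "continuous_on {-\<beta><..<T-\<alpha>} (\<lambda>s. f' s / (2 * sqrt (f s + l0)))"
  proof (rule continuous_on_divide)
    show "continuous_on {-\<beta><..<T-\<alpha>} f'"
      by (rule continuous_on_subset[OF f'_cont]) auto
    have "continuous_on {-\<beta><..<T-\<alpha>} f"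
      by (rule continuous_on_subset[OF continuous]) auto
    then show "continuous_on {-\<beta><..<T-\<alpha>} (\<lambda>s. 2 * sqrt (f s + l0))"
      by (intro continuous_intros)
    show "\<forall>s\<in>{-\<beta><..<T-\<alpha>}. 2 * sqrt (f s + l0) \<noteq> 0"
      using pos by force
  qed
  ultimately obtain c where "0 < c" and c: "\<forall>\<tau>\<in>{\<alpha>..\<beta>}. \<forall>\<sigma>\<in>{\<alpha>..\<beta>}.
      c * (\<tau> - \<sigma>)\<^sup>2 \<le> integral {0..T} (\<lambda>t. (sqrt (f (t - \<tau>) + l0) - sqrt l0 - (sqrt (f (t - \<sigma>) + l0) - sqrt l0))\<^sup>2)"
    using sqrt_signal.shift_L2_lower_bound[of "\<lambda>s. f' s / (2 * sqrt (f s + l0))"] by blast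
  then show ?thesis
    unfolding hellinger_shift_def by (intro exI[of _ c]) simp
qed

end

section \<open>Delays determine the position\<close>

lemma inner_vec2: "(x::real^2) \<bullet> y = x$1 * y$1 + x$2 * y$2"
  by (simp add: inner_vec_def sum_2)

lemma norm_vec2_power2: "(norm (x::real^2))\<^sup>2 = (x$1)\<^sup>2 + (x$2)\<^sup>2"
  unfolding power2_norm_eq_inner inner_vec2 by (simp add: power2_eq_square)

lemma det2_sq_norm_le:
  fixes p q w :: "real^2"
  shows "(p$1 * q$2 - p$2 * q$1)\<^sup>2 * (norm w)\<^sup>2 \<le> ((norm p)\<^sup>2 + (norm q)\<^sup>2) * ((w \<bullet> p)\<^sup>2 + (w \<bullet> q)\<^sup>2)"
proof -
  have cauchy_schwarz: "(a * X - b * Y)\<^sup>2 \<le> (a\<^sup>2 + b\<^sup>2) * (X\<^sup>2 + Y\<^sup>2)" for a b X Y :: real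
  proof -
    have "(a\<^sup>2 + b\<^sup>2) * (X\<^sup>2 + Y\<^sup>2) = (a * X - b * Y)\<^sup>2 + (a * Y + b * X)\<^sup>2"
      by (simp add: power2_eq_square algebra_simps)
    then show ?thesis by simp
  qed
  define d where "d = p$1 * q$2 - p$2 * q$1"
  \<comment> \<open>Cramer's rule: \<open>w\<close> is recovered from \<open>w \<bullet> p\<close> and \<open>w \<bullet> q\<close>\<close>
  have "d * w$1 = q$2 * (w \<bullet> p) - p$2 * (w \<bullet> q)" "d * w$2 = p$1 * (w \<bullet> q) - q$1 * (w \<bullet> p)"
    unfolding d_def inner_vec2 by (simp_all add: algebra_simps)
  then have "d\<^sup>2 * (norm w)\<^sup>2 = (q$2 * (w \<bullet> p) - p$2 * (w \<bullet> q))\<^sup>2 + (p$1 * (w \<bullet> q) - q$1 * (w \<bullet> p))\<^sup>2"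
    by (simp add: norm_vec2_power2 power_mult_distrib[symmetric] distrib_left)
  also have "\<dots> \<le> ((q$2)\<^sup>2 + (p$2)\<^sup>2) * ((w \<bullet> p)\<^sup>2 + (w \<bullet> q)\<^sup>2) + ((p$1)\<^sup>2 + (q$1)\<^sup>2) * ((w \<bullet> q)\<^sup>2 + (w \<bullet> p)\<^sup>2)"
    by (intro add_mono cauchy_schwarz)
  also have "\<dots> = ((norm p)\<^sup>2 + (norm q)\<^sup>2) * ((w \<bullet> p)\<^sup>2 + (w \<bullet> q)\<^sup>2)"
    by (simp add: norm_vec2_power2 algebra_simps)
  finally show ?thesis unfolding d_def .
qed

lemma det2_nonzero_if_not_collinear:
  fixes a b c :: "real^2"
  assumes "\<not> collinear {a, b, c}"
  shows "(b - a)$1 * (c - a)$2 - (b - a)$2 * (c - a)$1 \<noteq> 0"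
proof
  define p where "p = b - a"
  define q where "q = c - a"
  assume "(b - a)$1 * (c - a)$2 - (b - a)$2 * (c - a)$1 = 0"
  then have det: "p$1 * q$2 = p$2 * q$1"
    by (simp add: p_def q_def)
  have "p = 0 \<or> (\<exists>c. q = c *\<^sub>R p)"
  proof (cases "p$1 = 0")
    case True
    then show ?thesis
      using det by (cases "p$2 = 0") (auto simp: vec_eq_iff forall_2 field_simps intro!: exI[of _ "q$2 / p$2"])
  next
    case False
    then show ?thesis
      using det by (auto simp: vec_eq_iff forall_2 field_simps intro!: exI[of _ "q$1 / p$1"])
  qed
  then have "collinear {0, p, q}"
    unfolding collinear_lemma by blast
  then have "collinear {b, a, c}"
    unfolding p_def q_def by (subst collinear_3) auto
  then show False
    using assms by (simp add: insert_commute)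
qed

lemma inner_eq_dist_power2_diff:
  fixes d \<theta> \<theta>0 :: "'a::real_inner"
  shows "(\<theta>0 - \<theta>) \<bullet> ((d + d) - \<theta> - \<theta>0) = (dist d \<theta>)\<^sup>2 - (dist d \<theta>0)\<^sup>2"
  unfolding dist_norm power2_norm_eq_inner
  by (simp add: inner_diff_left inner_diff_right inner_add_right inner_commute algebra_simps)

lemma dist_power2_diff_le_delay_diff:
  assumes "0 < \<nu>" "dist d \<theta> \<le> R" "dist d \<theta>0 \<le> R"
  shows "((dist d \<theta>)\<^sup>2 - (dist d \<theta>0)\<^sup>2)\<^sup>2 \<le> 4 * R\<^sup>2 * \<nu>\<^sup>2 * (tau \<nu> d \<theta> - tau \<nu> d \<theta>0)\<^sup>2"
proof -
  have "((dist d \<theta>)\<^sup>2 - (dist d \<theta>0)\<^sup>2)\<^sup>2 = (dist d \<theta> - dist d \<theta>0)\<^sup>2 * (dist d \<theta> + dist d \<theta>0)\<^sup>2"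
    by (simp add: power2_eq_square algebra_simps)
  also have "\<dots> \<le> (dist d \<theta> - dist d \<theta>0)\<^sup>2 * (2 * R)\<^sup>2"
    using assms by (intro mult_left_mono power_mono) auto
  also have "\<dots> = 4 * R\<^sup>2 * \<nu>\<^sup>2 * (tau \<nu> d \<theta> - tau \<nu> d \<theta>0)\<^sup>2"
    using assms(1) by (simp add: tau_def power2_eq_square field_simps)
  finally show ?thesis .
qed

lemma power2_le_of_half_diffs:
  fixes x y a b c :: real
  assumes "b - a = 2 * x" "c - a = 2 * y"
  shows "x\<^sup>2 + y\<^sup>2 \<le> a\<^sup>2 + b\<^sup>2 + c\<^sup>2"
proof -
  have "4 * (x\<^sup>2 + y\<^sup>2) + (a + b)\<^sup>2 + (a + c)\<^sup>2 + 2 * b\<^sup>2 + 2 * c\<^sup>2 = 4 * (a\<^sup>2 + b\<^sup>2 + c\<^sup>2)"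
    using assms by (simp add: power2_eq_square algebra_simps)
  then show ?thesis
    by (smt (verit) zero_le_power2)
qed

text \<open>With \<open>z d = (dist d \<theta>)\<^sup>2 - (dist d \<theta>0)\<^sup>2\<close>, the differences \<open>z db - z da\<close> and
  \<open>z dc - z da\<close> are \<open>2 (\<theta>0 - \<theta>) \<bullet> (db - da)\<close> and \<open>2 (\<theta>0 - \<theta>) \<bullet> (dc - da)\<close>, which
  determine \<open>\<theta>0 - \<theta>\<close> since \<open>db - da\<close> and \<open>dc - da\<close> are linearly independent.\<close>

lemma delay_differences_dominate:
  fixes da db dc :: "real^2"
  assumes "\<not> collinear {da, db, dc}" "0 < R" "0 < \<nu>"
  shows "\<exists>G>0. \<forall>\<theta> \<theta>0. (\<forall>d\<in>{da, db, dc}. dist d \<theta> \<le> R \<and> dist d \<theta>0 \<le> R) \<longrightarrow>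
     G * (norm (\<theta> - \<theta>0))\<^sup>2 \<le> (tau \<nu> da \<theta> - tau \<nu> da \<theta>0)\<^sup>2 + (tau \<nu> db \<theta> - tau \<nu> db \<theta>0)\<^sup>2
                            + (tau \<nu> dc \<theta> - tau \<nu> dc \<theta>0)\<^sup>2"
proof -
  define p where "p = db - da"
  define q where "q = dc - da"
  define det where "det = p$1 * q$2 - p$2 * q$1"
  define K where "K = 4 * R\<^sup>2 * \<nu>\<^sup>2"
  have "det \<noteq> 0"
    unfolding det_def p_def q_def by (rule det2_nonzero_if_not_collinear[OF assms(1)])
  then have "p \<noteq> 0"
    by (auto simp: det_def)
  then have M: "0 < ((norm p)\<^sup>2 + (norm q)\<^sup>2) * K"
    using assms(2,3) by (simp add: K_def add_pos_nonneg)
  show ?thesis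
  proof (intro exI[of _ "det\<^sup>2 / (((norm p)\<^sup>2 + (norm q)\<^sup>2) * K)"] conjI allI impI)
    show "0 < det\<^sup>2 / (((norm p)\<^sup>2 + (norm q)\<^sup>2) * K)"
      using \<open>det \<noteq> 0\<close> M by simp
    fix \<theta> \<theta>0 :: "real^2"
    assume near: "\<forall>d\<in>{da, db, dc}. dist d \<theta> \<le> R \<and> dist d \<theta>0 \<le> R"
    define w where "w = \<theta>0 - \<theta>"
    define z where "z d = w \<bullet> ((d + d) - \<theta> - \<theta>0)" for d
    have z_le: "(z d)\<^sup>2 \<le> K * (tau \<nu> d \<theta> - tau \<nu> d \<theta>0)\<^sup>2" if "d \<in> {da, db, dc}" for d
      unfolding z_def w_def inner_eq_dist_power2_diff K_def
      using near that assms(3) by (intro dist_power2_diff_le_delay_diff) auto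
    have "z db - z da = 2 * (w \<bullet> p)" "z dc - z da = 2 * (w \<bullet> q)"
      unfolding z_def p_def q_def inner_diff_right inner_add_right by simp_all
    then have "(w \<bullet> p)\<^sup>2 + (w \<bullet> q)\<^sup>2 \<le> (z da)\<^sup>2 + (z db)\<^sup>2 + (z dc)\<^sup>2"
      by (rule power2_le_of_half_diffs)
    also have "\<dots> \<le> K * ((tau \<nu> da \<theta> - tau \<nu> da \<theta>0)\<^sup>2 + (tau \<nu> db \<theta> - tau \<nu> db \<theta>0)\<^sup>2
                          + (tau \<nu> dc \<theta> - tau \<nu> dc \<theta>0)\<^sup>2)"
      using z_le[of da] z_le[of db] z_le[of dc] by (simp add: distrib_left)
    finally have "det\<^sup>2 * (norm w)\<^sup>2 \<le> ((norm p)\<^sup>2 + (norm q)\<^sup>2) * (K *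
        ((tau \<nu> da \<theta> - tau \<nu> da \<theta>0)\<^sup>2 + (tau \<nu> db \<theta> - tau \<nu> db \<theta>0)\<^sup>2 + (tau \<nu> dc \<theta> - tau \<nu> dc \<theta>0)\<^sup>2))"
      using det2_sq_norm_le[of p q w] unfolding det_def
      by (meson mult_left_mono order_trans add_nonneg_nonneg zero_le_power2)
    then show "det\<^sup>2 / (((norm p)\<^sup>2 + (norm q)\<^sup>2) * K) * (norm (\<theta> - \<theta>0))\<^sup>2 \<le>
        (tau \<nu> da \<theta> - tau \<nu> da \<theta>0)\<^sup>2 + (tau \<nu> db \<theta> - tau \<nu> db \<theta>0)\<^sup>2 + (tau \<nu> dc \<theta> - tau \<nu> dc \<theta>0)\<^sup>2"
      using M by (simp add: w_def norm_minus_commute pos_divide_le_eq mult_ac)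
  qed
qed

lemma delay_differences_dominate_on_bounded:
  fixes \<Theta> :: "(real^2) set" and dp :: "nat \<Rightarrow> real^2"
  assumes "bounded \<Theta>" "\<not> collinear {dp ia, dp ib, dp ic}" "0 < \<nu>"
  obtains G where "0 < G" "\<And>\<theta> \<theta>0. \<theta> \<in> \<Theta> \<Longrightarrow> \<theta>0 \<in> \<Theta> \<Longrightarrow>
      G * (norm (\<theta> - \<theta>0))\<^sup>2 \<le> (\<Sum>j\<in>{ia, ib, ic}. (tau \<nu> (dp j) \<theta> - tau \<nu> (dp j) \<theta>0)\<^sup>2)"
proof -
  obtain B where "0 < B" and B: "\<And>x. x \<in> \<Theta> \<Longrightarrow> norm x \<le> B"
    using \<open>bounded \<Theta>\<close> unfolding bounded_pos by blast
  define R where "R = B + norm (dp ia) + norm (dp ib) + norm (dp ic)"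
  have "0 < R"
    using \<open>0 < B\<close> by (simp add: R_def add_pos_nonneg)
  have near: "dist d \<theta> \<le> R" if "d \<in> {dp ia, dp ib, dp ic}" "\<theta> \<in> \<Theta>" for d \<theta>
  proof -
    have "dist d \<theta> \<le> norm d + B"
      using norm_triangle_ineq4[of d \<theta>] B[OF that(2)] by (simp add: dist_norm)
    moreover have "norm d \<le> norm (dp ia) + norm (dp ib) + norm (dp ic)"
      using that(1) by auto
    ultimately show ?thesis by (simp add: R_def)
  qed
  obtain G where "0 < G" and G: "\<forall>\<theta> \<theta>0. (\<forall>d\<in>{dp ia, dp ib, dp ic}. dist d \<theta> \<le> R \<and> dist d \<theta>0 \<le> R) \<longrightarrow>
      G * (norm (\<theta> - \<theta>0))\<^sup>2 \<le> (tau \<nu> (dp ia) \<theta> - tau \<nu> (dp ia) \<theta>0)\<^sup>2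
        + (tau \<nu> (dp ib) \<theta> - tau \<nu> (dp ib) \<theta>0)\<^sup>2 + (tau \<nu> (dp ic) \<theta> - tau \<nu> (dp ic) \<theta>0)\<^sup>2"
    using delay_differences_dominate[OF assms(2) \<open>0 < R\<close> \<open>0 < \<nu>\<close>] by blast
  have "ia \<noteq> ib" "ia \<noteq> ic" "ib \<noteq> ic"
    using assms(2) by (auto simp: collinear_2 insert_commute)
  show ?thesis
  proof (rule that[OF \<open>0 < G\<close>])
    fix \<theta> \<theta>0 assume "\<theta> \<in> \<Theta>" "\<theta>0 \<in> \<Theta>"
    then show "G * (norm (\<theta> - \<theta>0))\<^sup>2 \<le> (\<Sum>j\<in>{ia, ib, ic}. (tau \<nu> (dp j) \<theta> - tau \<nu> (dp j) \<theta>0)\<^sup>2)"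
      using G near \<open>ia \<noteq> ib\<close> \<open>ia \<noteq> ic\<close> \<open>ib \<noteq> ic\<close> by (simp add: add.assoc)
  qed
qed

lemma hellinger_shift_nonneg: "0 \<le> hellinger_shift f l0 T \<tau> \<sigma>"
  unfolding hellinger_shift_def
  by (cases "(\<lambda>t. (sqrt (f (t - \<tau>) + l0) - sqrt (f (t - \<sigma>) + l0))\<^sup>2) integrable_on {0..T}")
    (simp_all add: integral_nonneg not_integrable_integral)

lemma tau_mem_delay_range:
  assumes "bounded \<Theta>" "\<theta> \<in> \<Theta>" "0 < \<nu>"
  shows "tau \<nu> d \<theta> \<in> {alpha \<nu> d \<Theta>..beta \<nu> d \<Theta>}"
proof -
  obtain B where B: "\<And>x. x \<in> \<Theta> \<Longrightarrow> norm x \<le> B"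
    using assms(1) unfolding bounded_iff by blast
  have "tau \<nu> d x \<le> (norm d + B) / \<nu>" if "x \<in> \<Theta>" for x
    unfolding tau_def using assms(3) B[OF that] norm_triangle_ineq4[of d x]
    by (intro divide_right_mono) (auto simp: dist_norm)
  then have "bdd_above (tau \<nu> d ` \<Theta>)"
    by (intro bdd_aboveI2)
  moreover have "bdd_below (tau \<nu> d ` \<Theta>)"
    using assms(3) by (intro bdd_belowI2[of _ 0]) (simp add: tau_def)
  ultimately show ?thesis
    unfolding alpha_def beta_def using assms(2) by (simp add: cINF_lower cSUP_upper)
qed

lemma hellinger_sum_lower_bound:
  fixes \<Theta> :: "(real^2) set" and dp :: "nat \<Rightarrow> real^2"
  assumes signals: "\<And>j. j < k \<Longrightarrow> onset_signal (lam j) (a j) (b j) T"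
    and deriv: "\<And>j s. j < k \<Longrightarrow> s \<in> {-b j..T - a j} \<Longrightarrow>
                  (lam j has_real_derivative lam' j s) (at s within {-b j..T - a j})"
    and deriv_cont: "\<And>j. j < k \<Longrightarrow> continuous_on {-b j..T - a j} (lam' j)"
    and delays: "\<And>j \<theta>. j < k \<Longrightarrow> \<theta> \<in> \<Theta> \<Longrightarrow> tau \<nu> (dp j) \<theta> \<in> {a j..b j}"
    and "bounded \<Theta>"
    and detectors: "ia < k" "ib < k" "ic < k" "\<not> collinear {dp ia, dp ib, dp ic}"
    and "0 < l0" "0 < \<nu>"
  shows "\<exists>\<kappa>>0. \<forall>\<theta>\<in>\<Theta>. \<forall>\<theta>0\<in>\<Theta>. \<kappa> * (norm (\<theta> - \<theta>0))\<^sup>2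
           \<le> (\<Sum>j<k. hellinger_shift (lam j) l0 T (tau \<nu> (dp j) \<theta>) (tau \<nu> (dp j) \<theta>0))"
proof -
  have "\<forall>j\<in>{ia, ib, ic}. \<exists>c>0. \<forall>\<tau>\<in>{a j..b j}. \<forall>\<sigma>\<in>{a j..b j}.
      c * (\<tau> - \<sigma>)\<^sup>2 \<le> hellinger_shift (lam j) l0 T \<tau> \<sigma>"
    using onset_signal.hellinger_shift_lower_bound[OF signals deriv deriv_cont \<open>0 < l0\<close>] detectors
    by blast
  then obtain c where c_pos: "\<And>j. j \<in> {ia, ib, ic} \<Longrightarrow> 0 < c j"
    and c: "\<And>j \<tau> \<sigma>. j \<in> {ia, ib, ic} \<Longrightarrow> \<tau> \<in> {a j..b j} \<Longrightarrow> \<sigma> \<in> {a j..b j} \<Longrightarrow>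
              c j * (\<tau> - \<sigma>)\<^sup>2 \<le> hellinger_shift (lam j) l0 T \<tau> \<sigma>"
    by metis
  define cm where "cm = Min (c ` {ia, ib, ic})"
  have "0 < cm" and cm_le: "\<And>j. j \<in> {ia, ib, ic} \<Longrightarrow> cm \<le> c j"
    using c_pos by (auto simp: cm_def)
  obtain G where "0 < G" and G: "\<And>\<theta> \<theta>0. \<theta> \<in> \<Theta> \<Longrightarrow> \<theta>0 \<in> \<Theta> \<Longrightarrow>
      G * (norm (\<theta> - \<theta>0))\<^sup>2 \<le> (\<Sum>j\<in>{ia, ib, ic}. (tau \<nu> (dp j) \<theta> - tau \<nu> (dp j) \<theta>0)\<^sup>2)"
    using delay_differences_dominate_on_bounded[OF \<open>bounded \<Theta>\<close> detectors(4) \<open>0 < \<nu>\<close>] by blast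
  show ?thesis
  proof (intro exI[of _ "cm * G"] conjI ballI)
    show "0 < cm * G"
      using \<open>0 < cm\<close> \<open>0 < G\<close> by simp
    fix \<theta> \<theta>0 assume "\<theta> \<in> \<Theta>" "\<theta>0 \<in> \<Theta>"
    have "cm * G * (norm (\<theta> - \<theta>0))\<^sup>2 \<le> (\<Sum>j\<in>{ia, ib, ic}. cm * (tau \<nu> (dp j) \<theta> - tau \<nu> (dp j) \<theta>0)\<^sup>2)"
      using G[OF \<open>\<theta> \<in> \<Theta>\<close> \<open>\<theta>0 \<in> \<Theta>\<close>] \<open>0 < cm\<close> by (simp add: sum_distrib_left[symmetric] mult.assoc)
    also have "\<dots> \<le> (\<Sum>j\<in>{ia, ib, ic}. hellinger_shift (lam j) l0 T (tau \<nu> (dp j) \<theta>) (tau \<nu> (dp j) \<theta>0))"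
    proof (rule sum_mono)
      fix j assume j: "j \<in> {ia, ib, ic}"
      then have "cm * (tau \<nu> (dp j) \<theta> - tau \<nu> (dp j) \<theta>0)\<^sup>2 \<le> c j * (tau \<nu> (dp j) \<theta> - tau \<nu> (dp j) \<theta>0)\<^sup>2"
        using cm_le by (intro mult_right_mono) auto
      also have "\<dots> \<le> hellinger_shift (lam j) l0 T (tau \<nu> (dp j) \<theta>) (tau \<nu> (dp j) \<theta>0)"
        using j detectors delays \<open>\<theta> \<in> \<Theta>\<close> \<open>\<theta>0 \<in> \<Theta>\<close> by (intro c) auto
      finally show "cm * (tau \<nu> (dp j) \<theta> - tau \<nu> (dp j) \<theta>0)\<^sup>2
          \<le> hellinger_shift (lam j) l0 T (tau \<nu> (dp j) \<theta>) (tau \<nu> (dp j) \<theta>0)" .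
    qed
    also have "\<dots> \<le> (\<Sum>j<k. hellinger_shift (lam j) l0 T (tau \<nu> (dp j) \<theta>) (tau \<nu> (dp j) \<theta>0))"
      using detectors by (intro sum_mono2) (auto simp: hellinger_shift_nonneg)
    finally show "cm * G * (norm (\<theta> - \<theta>0))\<^sup>2
        \<le> (\<Sum>j<k. hellinger_shift (lam j) l0 T (tau \<nu> (dp j) \<theta>) (tau \<nu> (dp j) \<theta>0))" .
  qed
qed

lemma expected_sqrt_likelihood_ratio_bound:
  fixes \<Theta> :: "(real^2) set" and dp :: "nat \<Rightarrow> real^2"
  assumes signals: "\<And>j. j < k \<Longrightarrow> onset_signal (lam j) (a j) (b j) T"
    and deriv: "\<And>j s. j < k \<Longrightarrow> s \<in> {-b j..T - a j} \<Longrightarrow>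
                  (lam j has_real_derivative lam' j s) (at s within {-b j..T - a j})"
    and deriv_cont: "\<And>j. j < k \<Longrightarrow> continuous_on {-b j..T - a j} (lam' j)"
    and delays: "\<And>j \<theta>. j < k \<Longrightarrow> \<theta> \<in> \<Theta> \<Longrightarrow> tau \<nu> (dp j) \<theta> \<in> {a j..b j}"
    and "bounded \<Theta>"
    and detectors: "ia < k" "ib < k" "ic < k" "\<not> collinear {dp ia, dp ib, dp ic}"
    and "0 < l0" "0 < \<nu>"
  shows "\<exists>\<kappa>>0. \<forall>n::nat. n \<ge> 1 \<longrightarrow> (\<forall>\<theta>0\<in>\<Theta>. \<forall>u::real^2.
           \<theta>0 + (1 / sqrt (real n)) *\<^sub>R u \<in> \<Theta> \<longrightarrow>
           pp_expect k T (\<lambda>j t. real n * lam j (t - tau \<nu> (dp j) \<theta>0) + real n * l0)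
             (\<lambda>X. ennreal (exp ((loglik n T \<nu> l0 lam dp k (\<theta>0 + (1 / sqrt (real n)) *\<^sub>R u) X
                                  - loglik n T \<nu> l0 lam dp k \<theta>0 X) / 2)))
           \<le> ennreal (exp (- \<kappa> * (norm u)\<^sup>2)))"
proof -
  obtain \<kappa> where "0 < \<kappa>" and \<kappa>: "\<forall>\<theta>\<in>\<Theta>. \<forall>\<theta>0\<in>\<Theta>. \<kappa> * (norm (\<theta> - \<theta>0))\<^sup>2
      \<le> (\<Sum>j<k. hellinger_shift (lam j) l0 T (tau \<nu> (dp j) \<theta>) (tau \<nu> (dp j) \<theta>0))"
    using hellinger_sum_lower_bound[OF assms] by blast
  show ?thesis
  proof (intro exI[of _ "\<kappa> / 2"] conjI allI impI ballI half_gt_zero[OF \<open>0 < \<kappa>\<close>])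
    fix n :: nat and \<theta>0 u
    assume "1 \<le> n" "\<theta>0 \<in> \<Theta>" and \<theta>: "\<theta>0 + (1 / sqrt (real n)) *\<^sub>R u \<in> \<Theta>"
    have "(norm ((\<theta>0 + (1 / sqrt (real n)) *\<^sub>R u) - \<theta>0))\<^sup>2 = (norm u)\<^sup>2 / real n"
      using \<open>1 \<le> n\<close> by (simp add: power_divide)
    then have "\<kappa> / 2 * (norm u)\<^sup>2 \<le> real n / 2 *
        (\<Sum>j<k. hellinger_shift (lam j) l0 T (tau \<nu> (dp j) (\<theta>0 + (1 / sqrt (real n)) *\<^sub>R u)) (tau \<nu> (dp j) \<theta>0))"
      using \<kappa> \<theta> \<open>\<theta>0 \<in> \<Theta>\<close> \<open>1 \<le> n\<close> by (fastforce simp: field_simps)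
    then show "pp_expect k T (\<lambda>j t. real n * lam j (t - tau \<nu> (dp j) \<theta>0) + real n * l0)
             (\<lambda>X. ennreal (exp ((loglik n T \<nu> l0 lam dp k (\<theta>0 + (1 / sqrt (real n)) *\<^sub>R u) X
                                  - loglik n T \<nu> l0 lam dp k \<theta>0 X) / 2)))
           \<le> ennreal (exp (- (\<kappa> / 2) * (norm u)\<^sup>2))"
      using \<theta> \<open>\<theta>0 \<in> \<Theta>\<close> delays
      by (simp add: pp_expect_sqrt_likelihood_ratio[OF signals] \<open>0 < l0\<close> ennreal_leI)
  qed
qed

theorem lemma3:
  fixes \<Theta> :: "(real^2) set" and T \<nu> l0 :: real and k :: nat
    and dp :: "nat \<Rightarrow> real^2"
    and lam lam' lam'' :: "nat \<Rightarrow> real \<Rightarrow> real"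
  assumes Theta: "bounded \<Theta>" "open \<Theta>" "convex \<Theta>"
    and pos: "T > 0" "\<nu> > 0" "l0 > 0"
    and k3: "k \<ge> 3"
    and alpha_pos: "\<forall>j<k. alpha \<nu> (dp j) \<Theta> > 0"
    and beta_lt: "\<forall>j<k. beta \<nu> (dp j) \<Theta> < T"
    and R1: "\<forall>j<k. \<forall>t\<in>{- beta \<nu> (dp j) \<Theta>..0}. lam j t = 0"
            "\<forall>j<k. \<forall>t\<in>{0<..T - alpha \<nu> (dp j) \<Theta>}. lam j t > 0"
    and R2: "\<forall>j<k. \<forall>t\<in>{- beta \<nu> (dp j) \<Theta>..T - alpha \<nu> (dp j) \<Theta>}.
               (lam j has_real_derivative lam' j t)
                  (at t within {- beta \<nu> (dp j) \<Theta>..T - alpha \<nu> (dp j) \<Theta>}) \<and>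
               (lam' j has_real_derivative lam'' j t)
                  (at t within {- beta \<nu> (dp j) \<Theta>..T - alpha \<nu> (dp j) \<Theta>})"
            "\<forall>j<k. continuous_on {- beta \<nu> (dp j) \<Theta>..T - alpha \<nu> (dp j) \<Theta>} (lam'' j)"
    and R3: "(INF \<theta>\<in>\<Theta>. INF e\<in>{e :: real^2. norm e = 1}.
                e \<bullet> (fisherI T \<nu> l0 lam lam' dp k \<theta> *v e)) > 0"
    and R4: "\<exists>a<k. \<exists>b<k. \<exists>c<k. \<not> collinear {dp a, dp b, dp c}"
  shows "\<exists>\<kappa>>0. \<forall>n::nat. n \<ge> 1 \<longrightarrow> (\<forall>\<theta>0\<in>\<Theta>. \<forall>u::real^2.
           \<theta>0 + (1 / sqrt (real n)) *\<^sub>R u \<in> \<Theta> \<longrightarrow>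
           pp_expect k T (\<lambda>j t. real n * lam j (t - tau \<nu> (dp j) \<theta>0) + real n * l0)
             (\<lambda>X. ennreal (exp ((loglik n T \<nu> l0 lam dp k (\<theta>0 + (1 / sqrt (real n)) *\<^sub>R u) X
                                  - loglik n T \<nu> l0 lam dp k \<theta>0 X) / 2)))
           \<le> ennreal (exp (- \<kappa> * (norm u)\<^sup>2)))"
proof (cases "\<Theta> = {}")
  case True
  then show ?thesis by (intro exI[of _ 1]) simp
next
  case False
  define a where "a j = alpha \<nu> (dp j) \<Theta>" for j
  define b where "b j = beta \<nu> (dp j) \<Theta>" for j
  have delays: "\<And>j \<theta>. j < k \<Longrightarrow> \<theta> \<in> \<Theta> \<Longrightarrow> tau \<nu> (dp j) \<theta> \<in> {a j..b j}"
    using tau_mem_delay_range[OF Theta(1) _ pos(2)] by (simp add: a_def b_def)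
  have deriv: "\<And>j s. j < k \<Longrightarrow> s \<in> {-b j..T - a j} \<Longrightarrow>
      (lam j has_real_derivative lam' j s) (at s within {-b j..T - a j})"
    and deriv_cont: "\<And>j. j < k \<Longrightarrow> continuous_on {-b j..T - a j} (lam' j)"
    using R2(1) by (auto simp: a_def b_def intro!: DERIV_continuous_on)
  have signals: "onset_signal (lam j) (a j) (b j) T" if "j < k" for j
  proof
    show "0 < a j" "b j < T"
      using alpha_pos beta_lt that by (simp_all add: a_def b_def)
    obtain \<theta> where "\<theta> \<in> \<Theta>"
      using False by blast
    then show "a j \<le> b j"
      using delays[OF that] by fastforce
    show "continuous_on {-b j..T - a j} (lam j)"
      using deriv[OF that] by (rule DERIV_continuous_on)
  qed (use R1 that in \<open>auto simp: a_def b_def\<close>)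
  obtain ia ib ic where detectors: "ia < k" "ib < k" "ic < k" "\<not> collinear {dp ia, dp ib, dp ic}"
    using R4 by blast
  show ?thesis
    by (rule expected_sqrt_likelihood_ratio_bound[OF signals deriv deriv_cont delays Theta(1) detectors pos(3,2)])
qed

end
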